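(* Let $G=\{\cdot\mid *\}$ and let $\mathcal{U}=\mathcal{D}(G)$. Then $G\equiv_\mathcal{U}0$.
   Context: Games are finite partizan games; $\{\cdot\mid *\}$ is the game with no Left option and sole Right option $*=\{0\mid0\}$. $o(G)$ is the misère outcome class (ordered $\mathscr{L}>\mathscr{N}>\mathscr{R}$, $\mathscr{L}>\mathscr{P}>\mathscr{R}$). A universe is a set of games closed under options, disjunctive sums, conjugates, and forming $\{\mathscr{G}^L\mid\mathscr{G}^R\}$ from nonempty finite subsets of it; $\mathcal{D}(\mathcal{A})$ is the smallest universe containing $\mathcal{A}$. $G\equiv_\mathcal{U}H$ means $o(G+X)=o(H+X)$ for all $X\in\mathcal{U}$. *)

theory Defs
  imports "HOL-Library.FSet"
begin

datatype game = Game (lopts: "game fset") (ropts: "game fset")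

definition zero_game :: game where "zero_game = Game {||} {||}"
definition star_game :: game where "star_game = Game {|zero_game|} {|zero_game|}"

lemma size_lopt: "z |\<in>| A \<Longrightarrow> size z < size (Game A B)"
proof -
  assume z: "z |\<in>| A"
  have "size z < Suc (size z)" by simp
  also have "Suc (size z) \<le> (\<Sum>x\<in>fset A. Suc (size x))"
    using z by (intro member_le_sum) auto
  finally show ?thesis by (simp add: size_fset_overloaded_simps)
qed

lemma size_ropt: "z |\<in>| B \<Longrightarrow> size z < size (Game A B)"
proof -
  assume z: "z |\<in>| B"
  have "size z < Suc (size z)" by simp
  also have "Suc (size z) \<le> (\<Sum>x\<in>fset B. Suc (size x))"
    using z by (intro member_le_sum) auto
  finally show ?thesis by (simp add: size_fset_overloaded_simps)
qed

lemma size_opt_aux: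
  "(z::game) |\<in>| A \<or> z |\<in>| B \<Longrightarrow>
   size z < Suc ((\<Sum>x\<in>fset A. Suc (size x)) + (\<Sum>x\<in>fset B. Suc (size x)))"
  using size_lopt[of z A B] size_ropt[of z B A] by (auto simp: size_fset_overloaded_simps)

function gsum :: "game \<Rightarrow> game \<Rightarrow> game" where
  "gsum (Game GL GR) (Game HL HR) =
     Game ((\<lambda>x. gsum x (Game HL HR)) |`| GL |\<union>| (\<lambda>y. gsum (Game GL GR) y) |`| HL)
          ((\<lambda>x. gsum x (Game HL HR)) |`| GR |\<union>| (\<lambda>y. gsum (Game GL GR) y) |`| HR)"
  by pat_completeness auto
termination
  by (relation "measure (\<lambda>(g,h). size g + size h)")
     (auto intro: size_opt_aux)

function gconj :: "game \<Rightarrow> game" where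
  "gconj (Game GL GR) = Game (gconj |`| GR) (gconj |`| GL)"
  by pat_completeness auto
termination
  by (relation "measure size") (auto intro: size_opt_aux)

text \<open>Misere play: \<open>wins_first True G\<close> means Left wins moving first in G,
  \<open>wins_first False G\<close> means Right wins moving first in G.
  A player who has no move on their turn wins.\<close>
function wins_first :: "bool \<Rightarrow> game \<Rightarrow> bool" where
  "wins_first True (Game GL GR) = (GL = {||} \<or> (\<exists>x\<in>fset GL. \<not> wins_first False x))"
| "wins_first False (Game GL GR) = (GR = {||} \<or> (\<exists>y\<in>fset GR. \<not> wins_first True y))"
  by pat_completeness auto
termination
  by (relation "measure (size \<circ> snd)") (auto intro: size_opt_aux)

datatype outcome = OL | ON | OP | OR

definition misere_outcome :: "game \<Rightarrow> outcome" where
  "misere_outcome G =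
     (if wins_first True G then (if wins_first False G then ON else OL)
      else (if wins_first False G then OR else OP))"

definition universe :: "game set \<Rightarrow> bool" where
  "universe U \<longleftrightarrow>
     (\<forall>G\<in>U. fset (lopts G) \<subseteq> U \<and> fset (ropts G) \<subseteq> U) \<and>
     (\<forall>G\<in>U. \<forall>H\<in>U. gsum G H \<in> U) \<and>
     (\<forall>G\<in>U. gconj G \<in> U) \<and>
     (\<forall>A B. A \<noteq> {||} \<and> B \<noteq> {||} \<and> fset A \<subseteq> U \<and> fset B \<subseteq> U \<longrightarrow> Game A B \<in> U)"

definition univ_closure :: "game set \<Rightarrow> game set" where
  "univ_closure A = \<Inter>{U. universe U \<and> A \<subseteq> U}"

definition misere_equiv :: "game set \<Rightarrow> game \<Rightarrow> game \<Rightarrow> bool" where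
  "misere_equiv U G H \<longleftrightarrow> (\<forall>X\<in>U. misere_outcome (gsum G X) = misere_outcome (gsum H X))"

end

theory Submission
  imports Defs
begin

text \<open>Call a game a parity game of parity \<open>p\<close> (odd if \<open>p\<close>) if every move flips the parity
  and every position in which some player has no move is even. In misere play the player to
  move wins such a game exactly when it is even; \<open>*\<close> is odd, and parity is additive under
  sums and preserved by conjugation. The games all of whose positions with an empty side are
  even parity games form a universe containing \<open>G\<close>. For such an \<open>X\<close>, adding \<open>G\<close> only gives
  Right the extra move to \<open>* + X\<close>: if Right has no move in \<open>X\<close>, then \<open>* + X\<close> is odd and the
  move wins, just as having no move wins in \<open>X\<close>; otherwise, unless Right already wins \<open>X\<close>,
  Left answers \<open>* \<rightarrow> 0\<close> and leaves Right to move in \<open>X\<close>, a loss for Right.\<close>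

function parity_game :: "bool \<Rightarrow> game \<Rightarrow> bool" where
  "parity_game p (Game L R) \<longleftrightarrow>
     (\<forall>z \<in> fset L \<union> fset R. parity_game (\<not> p) z) \<and> (L = {||} \<or> R = {||} \<longrightarrow> \<not> p)"
  by pat_completeness auto
termination
  by (relation "measure (size \<circ> snd)") (auto intro: size_opt_aux)

function stuck_even :: "game \<Rightarrow> bool" where
  "stuck_even (Game L R) \<longleftrightarrow>
     (L = {||} \<or> R = {||} \<longrightarrow> parity_game False (Game L R)) \<and>
     (\<forall>z \<in> fset L \<union> fset R. stuck_even z)"
  by pat_completeness auto
termination
  by (relation "measure size") (auto intro: size_opt_aux)

lemma parity_game_gsum:
  "parity_game p G \<Longrightarrow> parity_game q H \<Longrightarrow> parity_game (p \<noteq> q) (gsum G H)"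
proof (induction G H arbitrary: p q rule: gsum.induct)
  case (1 GL GR HL HR)
  let ?G = "Game GL GR" and ?H = "Game HL HR"
  have "parity_game ((\<not> p) \<noteq> q) (gsum z ?H)" if "z |\<in>| GL |\<union>| GR" for z
  proof -
    have "parity_game (\<not> p) z" using "1.prems"(1) that by auto
    then show ?thesis using that "1.IH"(1,3) "1.prems"(2) by blast
  qed
  moreover have "parity_game (p \<noteq> (\<not> q)) (gsum ?G z)" if "z |\<in>| HL |\<union>| HR" for z
  proof -
    have "parity_game (\<not> q) z" using "1.prems"(2) that by auto
    then show ?thesis using that "1.IH"(2,4) "1.prems"(1) by blast
  qed
  moreover have "\<not> (p \<noteq> q)" if "GL |\<union>| HL = {||} \<or> GR |\<union>| HR = {||}"
    using "1.prems" that by auto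
  ultimately show ?case by auto
qed

lemma wins_first_parity_game: "parity_game p G \<Longrightarrow> wins_first b G \<longleftrightarrow> \<not> p"
proof (induction b G arbitrary: p rule: wins_first.induct)
  case (1 GL GR)
  then have "wins_first False x \<longleftrightarrow> p" if "x |\<in>| GL" for x
    using that by auto
  with "1.prems" show ?case by auto
next
  case (2 GL GR)
  then have "wins_first True x \<longleftrightarrow> p" if "x |\<in>| GR" for x
    using that by auto
  with "2.prems" show ?case by auto
qed

lemma parity_game_gconj: "parity_game p G \<Longrightarrow> parity_game p (gconj G)"
  by (induction G arbitrary: p rule: gconj.induct) auto

lemma stuck_even_gsum: "stuck_even G \<Longrightarrow> stuck_even H \<Longrightarrow> stuck_even (gsum G H)"
proof (induction G H rule: gsum.induct)
  case (1 GL GR HL HR)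
  then show ?case using parity_game_gsum[of False "Game GL GR" False "Game HL HR"] by auto
qed

lemma stuck_even_gconj: "stuck_even G \<Longrightarrow> stuck_even (gconj G)"
proof (induction G rule: gconj.induct)
  case (1 GL GR)
  then show ?case using parity_game_gconj[of False "Game GL GR"] by auto
qed

lemma gsum_zero_left: "gsum zero_game X = X"
proof (induction X)
  case (Game L R)
  then have "gsum zero_game |`| L = L" "gsum zero_game |`| R = R"
    by (simp_all add: fset.map_ident_strong)
  then show ?case by (simp add: zero_game_def)
qed

lemma parity_game_star: "parity_game True star_game"
  by (simp add: star_game_def zero_game_def)

lemma stuck_even_Game_empty_star: "stuck_even (Game {||} {|star_game|})"
  by (simp add: star_game_def zero_game_def)

lemma universe_stuck_even: "universe {X. stuck_even X}"
  unfolding universe_def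
proof (intro conjI ballI allI impI)
  fix G assume "G \<in> {X. stuck_even X}"
  then show "fset (lopts G) \<subseteq> {X. stuck_even X}" "fset (ropts G) \<subseteq> {X. stuck_even X}"
    by (cases G; auto)+
next
  fix G H assume "G \<in> {X. stuck_even X}" "H \<in> {X. stuck_even X}"
  then show "gsum G H \<in> {X. stuck_even X}" by (simp add: stuck_even_gsum)
next
  fix G assume "G \<in> {X. stuck_even X}"
  then show "gconj G \<in> {X. stuck_even X}" by (simp add: stuck_even_gconj)
next
  fix A B assume "A \<noteq> {||} \<and> B \<noteq> {||} \<and> fset A \<subseteq> {X. stuck_even X} \<and> fset B \<subseteq> {X. stuck_even X}"
  then show "Game A B \<in> {X. stuck_even X}" by auto
qed

lemma univ_closure_least: "universe U \<Longrightarrow> A \<subseteq> U \<Longrightarrow> univ_closure A \<subseteq> U"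
  unfolding univ_closure_def by blast

lemma wins_first_gsum_Game_empty_star:
  assumes "stuck_even X"
  shows "wins_first b (gsum (Game {||} {|star_game|}) X) \<longleftrightarrow> wins_first b X"
  using assms
proof (induction X arbitrary: b)
  case (Game XL XR)
  let ?G = "Game {||} {|star_game|}" and ?X = "Game XL XR"
  have IH: "wins_first c (gsum ?G x) \<longleftrightarrow> wins_first c x" if "x |\<in>| XL |\<union>| XR" for x c
    using Game that by auto
  have G_plus_X: "gsum ?G ?X = Game (gsum ?G |`| XL) (finsert (gsum star_game ?X) (gsum ?G |`| XR))"
    by simp
  have star_plus_X: "gsum star_game ?X =
      Game (finsert ?X (gsum star_game |`| XL)) (finsert ?X (gsum star_game |`| XR))"
    by (simp add: star_game_def gsum_zero_left)
  show ?case
  proof (cases b)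
    case True
    then show ?thesis using IH by (simp add: G_plus_X)
  next
    case False
    have "wins_first False (gsum ?G ?X) \<longleftrightarrow>
        \<not> wins_first True (gsum star_game ?X) \<or> (\<exists>y\<in>fset XR. \<not> wins_first True y)"
      using IH by (simp add: G_plus_X)
    also have "\<dots> \<longleftrightarrow> wins_first False ?X"
    proof (cases "XR = {||}")
      case True
      then have "parity_game False ?X" using Game.prems by simp
      then have "parity_game True (gsum star_game ?X)"
        using parity_game_gsum[OF parity_game_star] by fastforce
      with True show ?thesis using wins_first_parity_game by simp
    next
      case False
      have "wins_first True (gsum star_game ?X)" if "\<not> wins_first False ?X"
        using that by (simp add: star_plus_X)
      with False show ?thesis by auto
    qed
    finally show ?thesis using \<open>\<not> b\<close> by simp
  qed
qed

theorem mainTheorem17: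
  fixes G :: game
  assumes "G = Game {||} {|star_game|}"
  shows "misere_equiv (univ_closure {G}) G zero_game"
proof -
  have "univ_closure {G} \<subseteq> {X. stuck_even X}"
    using univ_closure_least[OF universe_stuck_even] stuck_even_Game_empty_star assms by simp
  then show ?thesis
    unfolding misere_equiv_def misere_outcome_def gsum_zero_left
    using wins_first_gsum_Game_empty_star assms by auto
qed

end
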